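(* Let $\nabla$ be an ES basic fusion operator with representing basic assignment $\Phi\mapsto\succeq_\Phi$. The following are equivalent: (i) $\nabla$ satisfies (ESF-P); (ii) for every society $N$, every $N$-profile $\Phi$ and all $E,E'\in\mathcal E$ with $|[\![B(E)]\!]|\le 2$, if $B(\nabla(E_i,E))\wedge B(E')\vdash\bot$ for all $i\in N$ then $B(\nabla(\Phi,E))\wedge B(E')\vdash\bot$; (iii) for every society $N$, every $N$-profile $\Phi$ and all interpretations $w,w'$, if $w\succ_{E_i}w'$ for all $i\in N$ then $w\succ_\Phi w'$.
   Context: Setting: epistemic space $(\mathcal E,B,\mathcal L_{\mathcal P})$ ($\mathcal E$ nonempty, $B:\mathcal E\to$ propositional formulas over finite $\mathcal P$, image modulo equivalence exactly the consistent formulas; $\mathcal W_{\mathcal P}$ valuations, $[\![\phi]\!]$ models); agents: well-ordered set $\mathcal S$; society: nonempty finite $N\subseteq\mathcal S$; $N$-profile $\Phi:N\to\mathcal E$, $E_i=\Phi(i)$, identified with $E_i$ if $N=\{i\}$; profiles on $\{i_1<\dots<i_n\}$, $\{j_1<\dots<j_m\}$ equivalent if $n=m$ and entries coincide position-wise. ES basic fusion operator: a map $\nabla(\Phi,E)\in\mathcal E$ with (ESF1) $B(\nabla(\Phi,E))\vdash B(E)$; (ESF2) equivalent profiles and $B(E)\equiv B(E')$ give equivalent $B(\nabla)$; (ESF3) if $B(E)\equiv B(E')\wedge B(E'')$ then $B(\nabla(\Phi,E'))\wedge B(E'')\vdash B(\nabla(\Phi,E))$; (ESF4) if moreover $B(\nabla(\Phi,E'))\wedge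 B(E'')\nvdash\bot$ then $B(\nabla(\Phi,E))\vdash B(\nabla(\Phi,E'))\wedge B(E'')$. Representing basic assignment: the unique $\Phi\mapsto\succeq_\Phi$ (total preorders on $\mathcal W_{\mathcal P}$, $\succ$ strict part, equal on equivalent profiles) with $[\![B(\nabla(\Phi,E))]\!]=\max([\![B(E)]\!],\succeq_\Phi)$, $\max(C,\succeq)=\{c\in C:c\succeq x\ \forall x\in C\}$. (ESF-P): for every society $N$, $N$-profile $\Phi$ and $E,E'$, if $\bigwedge_{i\in N}B(\nabla(E_i,E))\nvdash\bot$ and $B(\nabla(E_i,E))\wedge B(E')\vdash\bot$ for all $i\in N$, then $B(\nabla(\Phi,E))\wedge B(E')\vdash\bot$. *)

theory Defs
  imports Main
begin

datatype 'p form =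
    Atom 'p
  | Bot
  | Neg "'p form"
  | Conj "'p form" "'p form"
  | Disj "'p form" "'p form"
  | Imp "'p form" "'p form"

text \<open>A valuation (interpretation) is the set of atoms it makes true.\<close>
type_synonym 'p valuation = "'p set"

fun sat :: "'p valuation \<Rightarrow> 'p form \<Rightarrow> bool" where
  "sat w (Atom p) = (p \<in> w)"
| "sat w Bot = False"
| "sat w (Neg f) = (\<not> sat w f)"
| "sat w (Conj f g) = (sat w f \<and> sat w g)"
| "sat w (Disj f g) = (sat w f \<or> sat w g)"
| "sat w (Imp f g) = (sat w f \<longrightarrow> sat w g)"

definition models :: "'p form \<Rightarrow> 'p valuation set" where
  "models f = {w. sat w f}"

definition entails :: "'p form \<Rightarrow> 'p form \<Rightarrow> bool" (infix "\<turnstile>" 55) where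
  "f \<turnstile> g \<longleftrightarrow> models f \<subseteq> models g"

definition inconsistent :: "'p form \<Rightarrow> bool" where
  "inconsistent f \<longleftrightarrow> f \<turnstile> Bot"

definition equiv_form :: "'p form \<Rightarrow> 'p form \<Rightarrow> bool" (infix "\<equiv>\<^sub>F" 50) where
  "f \<equiv>\<^sub>F g \<longleftrightarrow> f \<turnstile> g \<and> g \<turnstile> f"

text \<open>The set of epistemic states is the (nonempty) type 'e; B maps states to formulas.
  The image of B modulo equivalence is exactly the consistent formulas.\<close>
definition epistemic_space :: "('e \<Rightarrow> 'p::finite form) \<Rightarrow> bool" where
  "epistemic_space B \<longleftrightarrow>
     (\<forall>E. \<not> inconsistent (B E)) \<and>
     (\<forall>f. \<not> inconsistent f \<longrightarrow> (\<exists>E. B E \<equiv>\<^sub>F f))"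

text \<open>A profile is a partial map from agents to epistemic states whose domain
  (the society) is a nonempty finite set of agents.\<close>
definition profile :: "('s \<rightharpoonup> 'e) \<Rightarrow> bool" where
  "profile \<Phi> \<longleftrightarrow> finite (dom \<Phi>) \<and> dom \<Phi> \<noteq> {}"

definition entries :: "('s::linorder \<rightharpoonup> 'e) \<Rightarrow> 'e list" where
  "entries \<Phi> = map (\<lambda>i. the (\<Phi> i)) (sorted_list_of_set (dom \<Phi>))"

definition equiv_profile :: "('s::linorder \<rightharpoonup> 'e) \<Rightarrow> ('s \<rightharpoonup> 'e) \<Rightarrow> bool" where
  "equiv_profile \<Phi> \<Psi> \<longleftrightarrow> entries \<Phi> = entries \<Psi>"

definition es_basic_fusion ::
  "('e \<Rightarrow> 'p::finite form) \<Rightarrow> (('s::wellorder \<rightharpoonup> 'e) \<Rightarrow> 'e \<Rightarrow> 'e) \<Rightarrow> bool" where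
  "es_basic_fusion B nabla \<longleftrightarrow>
     (\<forall>\<Phi> E. profile \<Phi> \<longrightarrow> B (nabla \<Phi> E) \<turnstile> B E) \<and>
     (\<forall>\<Phi> \<Phi>' E E'. profile \<Phi> \<longrightarrow> profile \<Phi>' \<longrightarrow> equiv_profile \<Phi> \<Phi>' \<longrightarrow> B E \<equiv>\<^sub>F B E' \<longrightarrow>
         B (nabla \<Phi> E) \<equiv>\<^sub>F B (nabla \<Phi>' E')) \<and>
     (\<forall>\<Phi> E E' E''. profile \<Phi> \<longrightarrow> B E \<equiv>\<^sub>F Conj (B E') (B E'') \<longrightarrow>
         Conj (B (nabla \<Phi> E')) (B E'') \<turnstile> B (nabla \<Phi> E)) \<and>
     (\<forall>\<Phi> E E' E''. profile \<Phi> \<longrightarrow> B E \<equiv>\<^sub>F Conj (B E') (B E'') \<longrightarrow>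
         \<not> inconsistent (Conj (B (nabla \<Phi> E')) (B E'')) \<longrightarrow>
         B (nabla \<Phi> E) \<turnstile> Conj (B (nabla \<Phi> E')) (B E''))"

definition total_preorder_on_vals :: "('p valuation \<Rightarrow> 'p valuation \<Rightarrow> bool) \<Rightarrow> bool" where
  "total_preorder_on_vals ge \<longleftrightarrow>
     (\<forall>w w'. ge w w' \<or> ge w' w) \<and> (\<forall>w w' w''. ge w w' \<longrightarrow> ge w' w'' \<longrightarrow> ge w w'')"

definition strict :: "('a \<Rightarrow> 'a \<Rightarrow> bool) \<Rightarrow> 'a \<Rightarrow> 'a \<Rightarrow> bool" where
  "strict ge w w' \<longleftrightarrow> ge w w' \<and> \<not> ge w' w"

definition maxel :: "'a set \<Rightarrow> ('a \<Rightarrow> 'a \<Rightarrow> bool) \<Rightarrow> 'a set" where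
  "maxel C ge = {c \<in> C. \<forall>x\<in>C. ge c x}"

definition represents ::
  "('e \<Rightarrow> 'p::finite form) \<Rightarrow> (('s::wellorder \<rightharpoonup> 'e) \<Rightarrow> 'e \<Rightarrow> 'e)
   \<Rightarrow> (('s \<rightharpoonup> 'e) \<Rightarrow> 'p valuation \<Rightarrow> 'p valuation \<Rightarrow> bool) \<Rightarrow> bool" where
  "represents B nabla ge \<longleftrightarrow>
     (\<forall>\<Phi>. profile \<Phi> \<longrightarrow> total_preorder_on_vals (ge \<Phi>)) \<and>
     (\<forall>\<Phi> \<Psi>. profile \<Phi> \<longrightarrow> profile \<Psi> \<longrightarrow> equiv_profile \<Phi> \<Psi> \<longrightarrow> ge \<Phi> = ge \<Psi>) \<and>
     (\<forall>\<Phi> E. profile \<Phi> \<longrightarrow> models (B (nabla \<Phi> E)) = maxel (models (B E)) (ge \<Phi>))"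

text \<open>The singleton profile of agent i with entry E_i is [i \<mapsto> E_i].
  The big conjunction over i in N is inconsistent iff the intersection of models is empty.\<close>
definition ESF_P :: "('e \<Rightarrow> 'p::finite form) \<Rightarrow> (('s::wellorder \<rightharpoonup> 'e) \<Rightarrow> 'e \<Rightarrow> 'e) \<Rightarrow> bool" where
  "ESF_P B nabla \<longleftrightarrow>
     (\<forall>\<Phi> E E'. profile \<Phi> \<longrightarrow>
        (\<Inter>i\<in>dom \<Phi>. models (B (nabla [i \<mapsto> the (\<Phi> i)] E))) \<noteq> {} \<longrightarrow>
        (\<forall>i\<in>dom \<Phi>. inconsistent (Conj (B (nabla [i \<mapsto> the (\<Phi> i)] E)) (B E'))) \<longrightarrow>
        inconsistent (Conj (B (nabla \<Phi> E)) (B E')))"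

definition ESF_P2 :: "('e \<Rightarrow> 'p::finite form) \<Rightarrow> (('s::wellorder \<rightharpoonup> 'e) \<Rightarrow> 'e \<Rightarrow> 'e) \<Rightarrow> bool" where
  "ESF_P2 B nabla \<longleftrightarrow>
     (\<forall>\<Phi> E E'. profile \<Phi> \<longrightarrow> card (models (B E)) \<le> 2 \<longrightarrow>
        (\<forall>i\<in>dom \<Phi>. inconsistent (Conj (B (nabla [i \<mapsto> the (\<Phi> i)] E)) (B E'))) \<longrightarrow>
        inconsistent (Conj (B (nabla \<Phi> E)) (B E')))"

definition pareto_assignment ::
  "(('s \<rightharpoonup> 'e) \<Rightarrow> 'p valuation \<Rightarrow> 'p valuation \<Rightarrow> bool) \<Rightarrow> bool" where
  "pareto_assignment ge \<longleftrightarrow>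
     (\<forall>\<Phi> w w'. profile \<Phi> \<longrightarrow>
        (\<forall>i\<in>dom \<Phi>. strict (ge [i \<mapsto> the (\<Phi> i)]) w w') \<longrightarrow> strict (ge \<Phi>) w w')"

end

theory Submission
  imports Defs
begin

(* The fused result is the set of ge(Phi)-maximal models of B(E), so all three conditions
   are statements about the preorders. Pareto gives (ESF-P): a model w of B(nabla(Phi,E))
   consistent with E' is beaten, for every agent, by a common individual winner w0, hence
   w0 >(Phi) w, contradicting the maximality of w. (ESF-P) gives its two-model variant: if
   the individual results have no common model, then on at most two models they cover all
   of B(E), so E' is already inconsistent with B(E). Finally the two-model variant, applied
   to B(E) with models {w, w'} and B(E') with models {w'}, is literally the Pareto condition
   for w and w'. *)

lemma models_Conj: "models (Conj f g) = models f \<inter> models g"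
  by (auto simp: models_def)

lemma inconsistent_iff_models_empty: "inconsistent f \<longleftrightarrow> models f = {}"
  by (auto simp: inconsistent_def entails_def models_def)

lemma inconsistent_Conj_iff: "inconsistent (Conj f g) \<longleftrightarrow> models f \<inter> models g = {}"
  by (simp add: inconsistent_iff_models_empty models_Conj)

lemma models_eq_if_equiv_form: "f \<equiv>\<^sub>F g \<Longrightarrow> models f = models g"
  by (auto simp: equiv_form_def entails_def)

fun conjs :: "'p form list \<Rightarrow> 'p form" where
  "conjs [] = Neg Bot"
| "conjs (f # fs) = Conj f (conjs fs)"

fun disjs :: "'p form list \<Rightarrow> 'p form" where
  "disjs [] = Bot"
| "disjs (f # fs) = Disj f (disjs fs)"

lemma sat_conjs: "sat v (conjs fs) \<longleftrightarrow> (\<forall>f\<in>set fs. sat v f)"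
  by (induction fs) auto

lemma sat_disjs: "sat v (disjs fs) \<longleftrightarrow> (\<exists>f\<in>set fs. sat v f)"
  by (induction fs) auto

definition literal :: "'p valuation \<Rightarrow> 'p \<Rightarrow> 'p form" where
  "literal w p = (if p \<in> w then Atom p else Neg (Atom p))"

definition char_form :: "'p::finite valuation \<Rightarrow> 'p form" where
  "char_form w = conjs (map (literal w) (SOME ps. set ps = UNIV))"

lemma sat_char_form:
  fixes w :: "'p::finite valuation"
  shows "sat v (char_form w) \<longleftrightarrow> v = w"
proof -
  have atoms: "set (SOME ps. set ps = (UNIV :: 'p set)) = UNIV"
    by (rule someI_ex) (rule finite_list, simp)
  have "sat v (char_form w) \<longleftrightarrow> (\<forall>p. sat v (literal w p))"
    unfolding char_form_def sat_conjs set_map atoms by blast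
  also have "\<dots> \<longleftrightarrow> (\<forall>p. p \<in> v \<longleftrightarrow> p \<in> w)"
    by (auto simp: literal_def)
  finally show ?thesis
    by blast
qed

lemma ex_form_models: "\<exists>f. models f = (S :: 'p::finite valuation set)"
proof -
  obtain ws where "set ws = S"
    using finite_list[of S] by auto
  then have "models (disjs (map char_form ws)) = S"
    by (auto simp: models_def sat_disjs sat_char_form)
  then show ?thesis ..
qed

lemma epistemic_space_realizes:
  assumes "epistemic_space B" and "S \<noteq> {}"
  shows "\<exists>E. models (B E) = S"
proof -
  obtain f where f: "models f = S"
    using ex_form_models by blast
  with assms obtain E where "B E \<equiv>\<^sub>F f"
    unfolding epistemic_space_def inconsistent_iff_models_empty by blast
  then show ?thesis
    using f models_eq_if_equiv_form by blast
qed

lemma epistemic_space_models_nonempty: "epistemic_space B \<Longrightarrow> models (B E) \<noteq> {}"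
  by (simp add: epistemic_space_def inconsistent_iff_models_empty)

lemma maxel_subset: "maxel C ge \<subseteq> C"
  by (auto simp: maxel_def)

lemma strict_if_maxel_notin_maxel:
  assumes "total_preorder_on_vals ge" and "a \<in> maxel C ge" and "b \<in> C" and "b \<notin> maxel C ge"
  shows "strict ge a b"
  using assms unfolding maxel_def strict_def total_preorder_on_vals_def by blast

lemma strict_iff_notin_maxel_pair:
  assumes "total_preorder_on_vals ge"
  shows "strict ge w w' \<longleftrightarrow> w' \<notin> maxel {w, w'} ge"
  using assms unfolding maxel_def strict_def total_preorder_on_vals_def by blast

lemma card_le_2_covered_if_Inter_empty:
  assumes "finite C" and "card C \<le> 2"
    and sub: "\<And>i. i \<in> I \<Longrightarrow> M i \<subseteq> C" and ne: "\<And>i. i \<in> I \<Longrightarrow> M i \<noteq> {}"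
    and disjoint: "(\<Inter>i\<in>I. M i) = {}"
  shows "C \<subseteq> (\<Union>i\<in>I. M i)"
proof
  fix w assume w: "w \<in> C"
  obtain i where i: "i \<in> I" "w \<notin> M i"
    using disjoint by blast
  then obtain a where a: "a \<in> M i"
    using ne by blast
  have pair: "C = {a, w}"
  proof (rule card_seteq[symmetric])
    show "{a, w} \<subseteq> C" using a i sub w by blast
    have "a \<noteq> w" using a i by blast
    then show "card C \<le> card {a, w}" using \<open>card C \<le> 2\<close> by simp
  qed (use assms in simp)
  obtain j where j: "j \<in> I" "a \<notin> M j"
    using disjoint by blast
  then have "M j = {w}"
    using ne sub pair by blast
  then show "w \<in> (\<Union>i\<in>I. M i)"
    using j by blast
qed

lemma profile_singleton: "profile [i \<mapsto> x]"
  by (simp add: profile_def)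

locale represented_fusion =
  fixes B :: "'e \<Rightarrow> 'p::finite form"
    and nabla :: "('s::wellorder \<rightharpoonup> 'e) \<Rightarrow> 'e \<Rightarrow> 'e"
    and ge :: "('s \<rightharpoonup> 'e) \<Rightarrow> 'p valuation \<Rightarrow> 'p valuation \<Rightarrow> bool"
  assumes represents: "represents B nabla ge"
begin

lemma total_preorder: "profile \<Phi> \<Longrightarrow> total_preorder_on_vals (ge \<Phi>)"
  using represents by (simp add: represents_def)

lemma models_fusion: "profile \<Phi> \<Longrightarrow> models (B (nabla \<Phi> E)) = maxel (models (B E)) (ge \<Phi>)"
  using represents by (simp add: represents_def)

lemma models_fusion_subset: "profile \<Phi> \<Longrightarrow> models (B (nabla \<Phi> E)) \<subseteq> models (B E)"
  by (simp add: models_fusion maxel_subset)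

lemma ESF_P_if_pareto:
  assumes pareto: "pareto_assignment ge"
  shows "ESF_P B nabla"
  unfolding ESF_P_def inconsistent_Conj_iff
proof (intro allI impI)
  fix \<Phi> E E'
  let ?m = "\<lambda>i. models (B (nabla [i \<mapsto> the (\<Phi> i)] E))"
  assume prof: "profile \<Phi>" and common: "(\<Inter>i\<in>dom \<Phi>. ?m i) \<noteq> {}"
    and excluded: "\<forall>i\<in>dom \<Phi>. ?m i \<inter> models (B E') = {}"
  from common obtain w\<^sub>0 where w\<^sub>0: "\<And>i. i \<in> dom \<Phi> \<Longrightarrow> w\<^sub>0 \<in> ?m i"
    by blast
  show "models (B (nabla \<Phi> E)) \<inter> models (B E') = {}"
  proof (rule ccontr)
    assume "models (B (nabla \<Phi> E)) \<inter> models (B E') \<noteq> {}"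
    then obtain w where w: "w \<in> maxel (models (B E)) (ge \<Phi>)" and w': "w \<in> models (B E')"
      unfolding models_fusion[OF prof] by blast
    have "strict (ge [i \<mapsto> the (\<Phi> i)]) w\<^sub>0 w" if i: "i \<in> dom \<Phi>" for i
    proof (rule strict_if_maxel_notin_maxel[OF total_preorder[OF profile_singleton]])
      show "w\<^sub>0 \<in> maxel (models (B E)) (ge [i \<mapsto> the (\<Phi> i)])"
        using w\<^sub>0[OF i] by (simp add: models_fusion[OF profile_singleton])
      show "w \<in> models (B E)"
        using w by (simp add: maxel_def)
      show "w \<notin> maxel (models (B E)) (ge [i \<mapsto> the (\<Phi> i)])"
        using excluded i w' by (auto simp: models_fusion[OF profile_singleton])
    qed
    then have "strict (ge \<Phi>) w\<^sub>0 w"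
      using pareto prof unfolding pareto_assignment_def by blast
    moreover obtain i where "i \<in> dom \<Phi>"
      using prof by (auto simp: profile_def)
    then have "w\<^sub>0 \<in> models (B E)"
      using w\<^sub>0 models_fusion_subset[OF profile_singleton] by blast
    ultimately show False
      using w by (auto simp: maxel_def strict_def)
  qed
qed

end

locale represented_fusion_on_space = represented_fusion +
  assumes epistemic: "epistemic_space B"
begin

lemma ESF_P2_if_ESF_P:
  assumes esf_p: "ESF_P B nabla"
  shows "ESF_P2 B nabla"
  unfolding ESF_P2_def
proof (intro allI impI)
  fix \<Phi> E E'
  let ?m = "\<lambda>i. models (B (nabla [i \<mapsto> the (\<Phi> i)] E))"
  assume prof: "profile \<Phi>" and two: "card (models (B E)) \<le> 2"
    and excluded: "\<forall>i\<in>dom \<Phi>. inconsistent (Conj (B (nabla [i \<mapsto> the (\<Phi> i)] E)) (B E'))"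
  show "inconsistent (Conj (B (nabla \<Phi> E)) (B E'))"
  proof (cases "(\<Inter>i\<in>dom \<Phi>. ?m i) = {}")
    case True
    then have "models (B E) \<subseteq> (\<Union>i\<in>dom \<Phi>. ?m i)"
      using two models_fusion_subset[OF profile_singleton]
        epistemic_space_models_nonempty[OF epistemic]
      by (intro card_le_2_covered_if_Inter_empty) auto
    then have "models (B E) \<inter> models (B E') = {}"
      using excluded by (auto simp: inconsistent_Conj_iff)
    then show ?thesis
      using models_fusion_subset[OF prof] by (auto simp: inconsistent_Conj_iff)
  next
    case False
    then show ?thesis
      using esf_p prof excluded unfolding ESF_P_def by blast
  qed
qed

lemma pareto_if_ESF_P2:
  assumes esf_p2: "ESF_P2 B nabla"
  shows "pareto_assignment ge"
  unfolding pareto_assignment_def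
proof (intro allI impI)
  fix \<Phi> w w'
  assume prof: "profile \<Phi>" and beaten: "\<forall>i\<in>dom \<Phi>. strict (ge [i \<mapsto> the (\<Phi> i)]) w w'"
  obtain E where E: "models (B E) = {w, w'}"
    using epistemic_space_realizes[OF epistemic, of "{w, w'}"] by auto
  obtain E' where E': "models (B E') = {w'}"
    using epistemic_space_realizes[OF epistemic, of "{w'}"] by auto
  have pair_iff: "inconsistent (Conj (B (nabla \<Psi> E)) (B E')) \<longleftrightarrow> strict (ge \<Psi>) w w'"
    if "profile \<Psi>" for \<Psi>
  proof -
    have "inconsistent (Conj (B (nabla \<Psi> E)) (B E')) \<longleftrightarrow> w' \<notin> maxel {w, w'} (ge \<Psi>)"
      by (auto simp: inconsistent_Conj_iff models_fusion[OF that] E E')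
    then show ?thesis
      using strict_iff_notin_maxel_pair[OF total_preorder[OF that]] by simp
  qed
  have "card (models (B E)) \<le> 2"
    by (simp add: E card_insert_le_m1)
  moreover have "\<forall>i\<in>dom \<Phi>. inconsistent (Conj (B (nabla [i \<mapsto> the (\<Phi> i)] E)) (B E'))"
    using beaten pair_iff[OF profile_singleton] by blast
  ultimately have "inconsistent (Conj (B (nabla \<Phi> E)) (B E'))"
    using esf_p2 prof unfolding ESF_P2_def by blast
  then show "strict (ge \<Phi>) w w'"
    using pair_iff[OF prof] by blast
qed

end

theorem mainTheorem10:
  fixes B :: "'e \<Rightarrow> 'p::finite form"
    and nabla :: "('s::wellorder \<rightharpoonup> 'e) \<Rightarrow> 'e \<Rightarrow> 'e"
    and ge :: "('s \<rightharpoonup> 'e) \<Rightarrow> 'p set \<Rightarrow> 'p set \<Rightarrow> bool"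
  assumes "epistemic_space B"
    and "es_basic_fusion B nabla"
    and "represents B nabla ge"
  shows "(ESF_P B nabla \<longleftrightarrow> ESF_P2 B nabla) \<and> (ESF_P2 B nabla \<longleftrightarrow> pareto_assignment ge)"
proof -
  interpret represented_fusion_on_space B nabla ge
    using assms(1,3) by unfold_locales
  show ?thesis
    using ESF_P2_if_ESF_P pareto_if_ESF_P2 ESF_P_if_pareto by blast
qed

end
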